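(* Let $X$ be a real reflexive Banach space, $T:X\rightrightarrows X^{\ast}$ maximally monotone, and $h\in\mathcal{H}(T)$. Then: (i) for every $x\in\mathrm{dom}(T)$ and every $\epsilon\ge0$, the set $\breve{T}_h(\epsilon,x)$ is convex; (ii) the graph of $\breve{T}_h$ is demi-closed: if $\{x_n\}\subset X$ converges strongly (resp. weakly) to $x$, $x_n^{\ast}\in\breve{T}_h(\epsilon_n,x_n)$ with $\{x_n^{\ast}\}$ converging weakly (resp. strongly) to $x^{\ast}$, and $\epsilon_n\to\epsilon\ge0$, then $x^{\ast}\in\breve{T}_h(\epsilon,x)$; in particular $\breve{T}_h(\epsilon,x)$ is weakly closed; (iii) $\breve{T}_h(0,x)=T(x)$ for every $x\in X$.
   Context: $X^{\ast}$ is the dual of $X$ with pairing $\langle\cdot,\cdot\rangle$; $\mathrm{dom}(T)=\{x:T(x)\neq\emptyset\}$. The dual of $X\times X^{\ast}$ is identified with $X^{\ast}\times X$ via $\langle (x,x^{\ast}),(y^{\ast},y)\rangle=\langle x,y^{\ast}\rangle+\langle y,x^{\ast}\rangle$. $\mathcal{H}(T)$ is the family of lower semicontinuous convex $h:X\times X^{\ast}\to\mathbb{R}\cup\{+\infty\}$ with $h(x,x^{\ast})\ge\langle x,x^{\ast}\rangle$ everywhere and equality whenever $x^{\ast}\in T(x)$. For $\eta\ge0$, $\partial_\eta h(z)$ is the set of $(y^{\ast},y)\in X^{\ast}\times X$ with $h(w,w^{\ast})\ge h(z)+\langle (w,w^{\ast})-z,(y^{\ast},y)\rangle-\eta$ for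 all $(w,w^{\ast})$ when $h(z)<\infty$, and $\emptyset$ otherwise. $\breve{T}_h:[0,\infty)\times X\rightrightarrows X^{\ast}$ is $\breve{T}_h(\epsilon,x):=\{x^{\ast}:(x^{\ast},x)\in\partial_{2\epsilon}h(x,x^{\ast})\}$. *)

theory Defs
  imports "HOL-Analysis.Analysis"
begin

text \<open>Dual space X* is modelled as the type of bounded linear functionals 'a \<Rightarrow>L real.
  The pairing is blinfun_apply.\<close>

definition reflexive_space :: "'a::real_normed_vector itself \<Rightarrow> bool" where
  "reflexive_space _ \<longleftrightarrow>
     (\<forall>\<phi> :: ('a \<Rightarrow>\<^sub>L real) \<Rightarrow>\<^sub>L real. \<exists>x::'a. \<forall>f. blinfun_apply \<phi> f = blinfun_apply f x)"

definition weak_conv :: "(nat \<Rightarrow> 'b::real_normed_vector) \<Rightarrow> 'b \<Rightarrow> bool" where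
  "weak_conv xs x \<longleftrightarrow> (\<forall>f :: 'b \<Rightarrow>\<^sub>L real. (\<lambda>n. blinfun_apply f (xs n)) \<longlonglongrightarrow> blinfun_apply f x)"

definition weakly_closed :: "'b::real_normed_vector set \<Rightarrow> bool" where
  "weakly_closed S \<longleftrightarrow>
     (\<forall>x. x \<notin> S \<longrightarrow> (\<exists>F :: ('b \<Rightarrow>\<^sub>L real) set. finite F \<and> (\<exists>e>0.
        \<forall>y. (\<forall>f\<in>F. \<bar>blinfun_apply f y - blinfun_apply f x\<bar> < e) \<longrightarrow> y \<notin> S)))"

definition dom_op :: "('a \<Rightarrow> 'b set) \<Rightarrow> 'a set" where
  "dom_op T = {x. T x \<noteq> {}}"

definition monotone_op :: "('a::real_normed_vector \<Rightarrow> ('a \<Rightarrow>\<^sub>L real) set) \<Rightarrow> bool" where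
  "monotone_op T \<longleftrightarrow> (\<forall>x y xs ys. xs \<in> T x \<longrightarrow> ys \<in> T y \<longrightarrow>
      blinfun_apply (xs - ys) (x - y) \<ge> 0)"

definition maximal_monotone :: "('a::real_normed_vector \<Rightarrow> ('a \<Rightarrow>\<^sub>L real) set) \<Rightarrow> bool" where
  "maximal_monotone T \<longleftrightarrow> monotone_op T \<and>
     (\<forall>S. monotone_op S \<longrightarrow> (\<forall>x. T x \<subseteq> S x) \<longrightarrow> S = T)"

definition ereal_convex :: "('b::real_vector \<Rightarrow> ereal) \<Rightarrow> bool" where
  "ereal_convex h \<longleftrightarrow> (\<forall>z w (t::real). 0 \<le> t \<longrightarrow> t \<le> 1 \<longrightarrow>
      h ((1 - t) *\<^sub>R z + t *\<^sub>R w) \<le> ereal (1 - t) * h z + ereal t * h w)"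

definition ereal_lsc :: "('b::topological_space \<Rightarrow> ereal) \<Rightarrow> bool" where
  "ereal_lsc h \<longleftrightarrow> (\<forall>c::real. closed {z. h z \<le> ereal c})"

definition HT :: "('a::real_normed_vector \<Rightarrow> ('a \<Rightarrow>\<^sub>L real) set)
    \<Rightarrow> ('a \<times> ('a \<Rightarrow>\<^sub>L real) \<Rightarrow> ereal) set" where
  "HT T = {h. (\<forall>z. h z \<noteq> -\<infinity>) \<and> ereal_lsc h \<and> ereal_convex h \<and>
      (\<forall>x xs. h (x, xs) \<ge> ereal (blinfun_apply xs x)) \<and>
      (\<forall>x xs. xs \<in> T x \<longrightarrow> h (x, xs) = ereal (blinfun_apply xs x))}"

text \<open>Pairing of X \<times> X* with its dual X* \<times> X.\<close>
definition pair_dual :: "'a::real_normed_vector \<times> ('a \<Rightarrow>\<^sub>L real) \<Rightarrow> ('a \<Rightarrow>\<^sub>L real) \<times> 'a \<Rightarrow> real" where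
  "pair_dual z p = blinfun_apply (fst p) (fst z) + blinfun_apply (snd z) (snd p)"

definition eps_subdiff :: "('a::real_normed_vector \<times> ('a \<Rightarrow>\<^sub>L real) \<Rightarrow> ereal) \<Rightarrow> real
    \<Rightarrow> 'a \<times> ('a \<Rightarrow>\<^sub>L real) \<Rightarrow> (('a \<Rightarrow>\<^sub>L real) \<times> 'a) set" where
  "eps_subdiff h \<eta> z = (if h z < \<infinity> then
      {p. \<forall>w. h w \<ge> h z + ereal (pair_dual (w - z) p) - ereal \<eta>} else {})"

definition Tbreve :: "('a::real_normed_vector \<times> ('a \<Rightarrow>\<^sub>L real) \<Rightarrow> ereal) \<Rightarrow> real \<Rightarrow> 'a
    \<Rightarrow> ('a \<Rightarrow>\<^sub>L real) set" where
  "Tbreve h \<epsilon> x = {xs. (xs, x) \<in> eps_subdiff h (2 * \<epsilon>) (x, xs)}"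

end

(* An element xs of the enlargement at (eps, x) is characterised by
     r + xs y + ys x - 2 xs x - 2 eps <= h (y, ys)   for all (y, ys),   where r = h (x, xs).
   This condition is affine in (r, xs), so convexity of the enlargement follows from convexity of h.
   Along sequences with (x_n, xs_n) -> (x, xs) weakly and xs_n x_n -> xs x all terms on the left
   converge, while h (x, xs) <= liminf h (x_n, xs_n) because closed convex sublevel sets of h are
   weakly closed (Mazur, from Hahn-Banach separation). The pairing xs_n x_n converges when one
   sequence converges strongly and the other weakly, since weakly convergent sequences are bounded
   by the uniform boundedness principle. For eps = 0, evaluating the condition on the graph of T,
   where h is the pairing, shows that xs is monotonically related to T, so xs is in T x by
   maximality; conversely h (y, ys) >= xs y + ys x - xs x for xs in T x by convexity of h along
   segments. *)

theory Submission
  imports Defs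
begin

section \<open>The Hahn-Banach theorem\<close>

definition sublinear :: "('v::real_vector \<Rightarrow> real) \<Rightarrow> bool" where
  "sublinear p \<longleftrightarrow>
    (\<forall>x y. p (x + y) \<le> p x + p y) \<and> (\<forall>a x. 0 < a \<longrightarrow> p (a *\<^sub>R x) = a * p x)"

lemma sublinear_zero: "sublinear p \<Longrightarrow> p 0 = 0"
  unfolding sublinear_def by (metis mult_2 scaleR_zero_right zero_less_numeral
      add_cancel_right_left mult.commute)

lemma sublinear_scaleR_ge:
  assumes p: "sublinear p"
  shows "t * p x \<le> p (t *\<^sub>R x)"
proof (cases "0 < t")
  case True
  then show ?thesis using p unfolding sublinear_def by simp
next
  case False
  have "0 \<le> p x + p (- x)"
    using p sublinear_zero[OF p] unfolding sublinear_def by (metis add.right_inverse)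
  moreover have "p (t *\<^sub>R x) = - t * p (- x)"
  proof (cases "t = 0")
    case True
    then show ?thesis using sublinear_zero[OF p] by simp
  next
    case False
    with \<open>\<not> 0 < t\<close> have "0 < - t" by simp
    then have "p ((- t) *\<^sub>R (- x)) = - t * p (- x)"
      using p unfolding sublinear_def by blast
    then show ?thesis by simp
  qed
  ultimately show ?thesis
    using mult_nonpos_nonneg[of t "p x + p (- x)"] False by (simp add: distrib_left)
qed

lemma subspace_Union_chain:
  assumes "C \<noteq> {}" and "\<And>S. S \<in> C \<Longrightarrow> subspace S"
    and chain: "\<And>S T. S \<in> C \<Longrightarrow> T \<in> C \<Longrightarrow> S \<subseteq> T \<or> T \<subseteq> S"
  shows "subspace (\<Union>C)"
  unfolding subspace_def
proof (intro conjI ballI allI)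
  show "0 \<in> \<Union>C" using assms(1,2) subspace_0 by blast
next
  fix x y assume "x \<in> \<Union>C" "y \<in> \<Union>C"
  then obtain S T where "S \<in> C" "T \<in> C" "x \<in> S" "y \<in> T" by blast
  moreover from chain[OF this(1,2)] this have "x \<in> S \<and> y \<in> S \<or> x \<in> T \<and> y \<in> T" by blast
  ultimately show "x + y \<in> \<Union>C" using assms(2) subspace_add by blast
next
  fix c x assume "x \<in> \<Union>C"
  then obtain S where "S \<in> C" "x \<in> S" by blast
  then show "c *\<^sub>R x \<in> \<Union>C" using assms(2) subspace_scale by blast
qed

(* Partial linear functionals are represented by their graphs, subspaces of V x R below p.
   The new value a at y is squeezed between sup (b - p (x - y)) and inf (p (x' + y) - b'). *)
lemma dominated_graph_extension_value:
  fixes M :: "('v::real_vector \<times> real) set"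
  assumes p: "sublinear p" and M: "subspace M" and dom: "\<And>x b. (x, b) \<in> M \<Longrightarrow> b \<le> p x"
  obtains a where "\<And>x b t. (x, b) \<in> M \<Longrightarrow> b + t * a \<le> p (x + t *\<^sub>R y)"
proof -
  have M0: "(0, 0) \<in> M" using subspace_0[OF M] by (simp add: zero_prod_def)
  have Mscale: "(c *\<^sub>R x, c * b) \<in> M" if "(x, b) \<in> M" for c x b
    using subspace_scale[OF M that, of c] by simp
  have bounds: "b - p (x - y) \<le> p (x' + y) - b'" if "(x, b) \<in> M" "(x', b') \<in> M" for x b x' b'
  proof -
    have "b + b' \<le> p (x + x')" using dom subspace_add[OF M that] by simp
    also have "\<dots> = p ((x - y) + (x' + y))" by (simp add: algebra_simps)
    also have "\<dots> \<le> p (x - y) + p (x' + y)" using p unfolding sublinear_def by blast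
    finally show ?thesis by simp
  qed
  define S where "S = {b - p (x - y) | x b. (x, b) \<in> M}"
  define a where "a = Sup S"
  have "bdd_above S" using bounds M0 unfolding S_def by (intro bdd_aboveI) blast
  then have a_ge: "b - p (x - y) \<le> a" if "(x, b) \<in> M" for x b
    unfolding a_def using that S_def by (intro cSup_upper) blast+
  have a_le: "a \<le> p (x + y) - b" if "(x, b) \<in> M" for x b
    unfolding a_def using bounds that M0 S_def by (intro cSup_least) blast+
  show ?thesis
  proof (rule that)
    fix x b and t :: real assume xb: "(x, b) \<in> M"
    consider "t = 0" | "0 < t" | "0 < - t" by linarith
    then show "b + t * a \<le> p (x + t *\<^sub>R y)"
    proof cases
      case 1
      then show ?thesis using dom xb by simp
    next
      case 2
      have "a \<le> p ((1 / t) *\<^sub>R x + y) - (1 / t) * b" by (rule a_le[OF Mscale[OF xb]])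
      then have "t * a \<le> t * (p ((1 / t) *\<^sub>R x + y) - (1 / t) * b)"
        using 2 by (rule mult_left_mono[OF _ less_imp_le])
      also have "\<dots> = p (t *\<^sub>R ((1 / t) *\<^sub>R x + y)) - b"
        using p 2 unfolding sublinear_def by (simp add: right_diff_distrib)
      finally show ?thesis using 2 by (simp add: scaleR_add_right)
    next
      case 3
      have "(1 / - t) * b - p ((1 / - t) *\<^sub>R x - y) \<le> a" by (rule a_ge[OF Mscale[OF xb]])
      then have "- t * ((1 / - t) * b - p ((1 / - t) *\<^sub>R x - y)) \<le> - t * a"
        using 3 by (rule mult_left_mono[OF _ less_imp_le])
      moreover have "p ((- t) *\<^sub>R ((1 / - t) *\<^sub>R x - y)) = - t * p ((1 / - t) *\<^sub>R x - y)"
        using p 3 unfolding sublinear_def by blast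
      ultimately show ?thesis using 3 by (simp add: algebra_simps)
    qed
  qed
qed

lemma dominated_graph_extension:
  fixes M :: "('v::real_vector \<times> real) set"
  assumes p: "sublinear p" and M: "subspace M" and dom: "\<And>x b. (x, b) \<in> M \<Longrightarrow> b \<le> p x"
  obtains M' b where "subspace M'" "\<forall>(x, b) \<in> M'. b \<le> p x" "M \<subseteq> M'" "(y, b) \<in> M'"
proof -
  obtain a where a: "\<And>x b t. (x, b) \<in> M \<Longrightarrow> b + t * a \<le> p (x + t *\<^sub>R y)"
    using dominated_graph_extension_value[OF p M dom] by blast
  define M' where "M' = {m + n | m n. m \<in> M \<and> n \<in> span {(y, a)}}"
  show ?thesis
  proof (rule that)
    show "subspace M'" unfolding M'_def by (rule subspace_sums[OF M subspace_span])
    show "\<forall>(x, b) \<in> M'. b \<le> p x"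
    proof clarify
      fix x b assume "(x, b) \<in> M'"
      then obtain m t where "m \<in> M" "(x, b) = m + t *\<^sub>R (y, a)"
        unfolding M'_def span_singleton by blast
      then show "b \<le> p x" using a[of "fst m" "snd m" t] by (cases m) auto
    qed
    show "M \<subseteq> M'"
    proof
      fix m assume "m \<in> M"
      then show "m \<in> M'"
        unfolding M'_def using span_0[of "{(y, a)}"] by (intro CollectI exI[of _ m] exI[of _ 0]) simp
    qed
    show "(y, a) \<in> M'"
      unfolding M'_def using subspace_0[OF M] span_base[of "(y, a)"]
      by (intro CollectI exI[of _ 0] exI[of _ "(y, a)"]) simp
  qed
qed

theorem hahn_banach_sublinear:
  fixes p :: "'v::real_vector \<Rightarrow> real" and z :: 'v
  assumes p: "sublinear p"
  obtains f where "linear f" "\<And>x. f x \<le> p x" "f z = p z"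
proof -
  define A where "A = {G. subspace G \<and> (\<forall>(x, b) \<in> G. b \<le> p x) \<and> (z, p z) \<in> G}"
  have "\<forall>(x, b) \<in> span {(z, p z)}. b \<le> p x"
    by (auto simp: span_singleton sublinear_scaleR_ge[OF p])
  then have G0: "span {(z, p z)} \<in> A"
    unfolding A_def by (simp add: span_base)
  have upper: "\<exists>U\<in>A. \<forall>G\<in>C. G \<subseteq> U" if C: "C \<in> chains A" for C
  proof (cases "C = {}")
    case True
    then show ?thesis using G0 by blast
  next
    case False
    have "subspace (\<Union>C)"
      using subspace_Union_chain[OF False] chainsD[OF C] chainsD2[OF C] unfolding A_def by blast
    moreover have "(z, p z) \<in> \<Union>C" "\<forall>(x, b) \<in> \<Union>C. b \<le> p x"
      using False chainsD2[OF C] unfolding A_def by blast+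
    ultimately show ?thesis unfolding A_def by blast
  qed
  from Zorn_Lemma2[OF ballI[OF upper]] obtain M
    where "M \<in> A" and M_max: "\<And>G. G \<in> A \<Longrightarrow> M \<subseteq> G \<Longrightarrow> G = M"
    by blast
  then have M: "subspace M" and dom: "\<And>x b. (x, b) \<in> M \<Longrightarrow> b \<le> p x" and z: "(z, p z) \<in> M"
    unfolding A_def by auto
  have total: "\<exists>b. (y, b) \<in> M" for y
  proof -
    obtain M' b where "subspace M'" "\<forall>(x, b) \<in> M'. b \<le> p x" "M \<subseteq> M'" "(y, b) \<in> M'"
      using dominated_graph_extension[OF p M dom] by blast
    moreover from this have "M' = M" using z by (intro M_max) (auto simp: A_def)
    ultimately show ?thesis by blast
  qed
  have unique: "b = b'" if "(x, b) \<in> M" "(x, b') \<in> M" for x b b'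
    using dom[of 0 "b - b'"] dom[of 0 "b' - b"] subspace_diff[OF M that] subspace_diff[OF M that(2,1)]
      sublinear_zero[OF p] by simp
  define f where "f y = (SOME b. (y, b) \<in> M)" for y
  have graph: "(y, f y) \<in> M" for y unfolding f_def using total by (rule someI_ex)
  show ?thesis
  proof (rule that)
    show "linear f"
    proof (rule linearI)
      show "f (x + y) = f x + f y" for x y
        using unique[OF graph] subspace_add[OF M graph graph] by simp
      show "f (c *\<^sub>R x) = c *\<^sub>R f x" for c x
        using unique[OF graph] subspace_scale[OF M graph, of c] by simp
    qed
    show "f x \<le> p x" for x using dom graph by blast
    show "f z = p z" using unique[OF graph z] .
  qed
qed

lemma linear_dominated_imp_blinfun:
  fixes f :: "'v::real_normed_vector \<Rightarrow> real"
  assumes f: "linear f" and dom: "\<And>x. f x \<le> K * norm x" and K: "0 \<le> K"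
  obtains \<phi> :: "'v \<Rightarrow>\<^sub>L real" where "blinfun_apply \<phi> = f" and "norm \<phi> \<le> K"
proof -
  have abs_le: "\<bar>f x\<bar> \<le> K * norm x" for x
    using dom[of x] dom[of "- x"] linear_neg[OF f, of x] by simp
  then have bl: "bounded_linear f"
    using f by (intro bounded_linear_intro[of f K]) (auto simp: linear_add linear_scale mult.commute)
  show ?thesis
  proof (rule that)
    show "blinfun_apply (Blinfun f) = f" using bl by (rule bounded_linear_Blinfun_apply)
    show "norm (Blinfun f) \<le> K"
      using K abs_le by (intro norm_blinfun_bound) (simp_all add: bounded_linear_Blinfun_apply[OF bl])
  qed
qed

lemma norming_functional:
  fixes x :: "'v::real_normed_vector"
  obtains \<phi> :: "'v \<Rightarrow>\<^sub>L real" where "norm \<phi> \<le> 1" and "blinfun_apply \<phi> x = norm x"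
proof -
  have "sublinear norm" unfolding sublinear_def by (simp add: norm_triangle_ineq)
  then obtain f where "linear f" "\<And>y. f y \<le> norm y" "f x = norm x"
    using hahn_banach_sublinear[where z = x] by blast
  with linear_dominated_imp_blinfun[of f 1] that show ?thesis by force
qed

lemma norm_blinfun_evaluation:
  fixes x :: "'v::real_normed_vector"
  shows "norm (Blinfun (\<lambda>\<phi>::'v \<Rightarrow>\<^sub>L real. blinfun_apply \<phi> x)) = norm x"
proof -
  define J where "J = Blinfun (\<lambda>\<phi>::'v \<Rightarrow>\<^sub>L real. blinfun_apply \<phi> x)"
  have J: "blinfun_apply J \<phi> = blinfun_apply \<phi> x" for \<phi>
    unfolding J_def by (simp add: bounded_linear_Blinfun_apply[OF blinfun.bounded_linear_left])
  have "norm J \<le> norm x"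
  proof (rule norm_blinfun_bound)
    show "norm (blinfun_apply J \<phi>) \<le> norm x * norm \<phi>" for \<phi>
      using norm_blinfun[of \<phi> x] by (simp add: J mult.commute)
  qed simp
  moreover obtain \<phi> :: "'v \<Rightarrow>\<^sub>L real" where "norm \<phi> \<le> 1" "blinfun_apply \<phi> x = norm x"
    by (rule norming_functional)
  then have "norm x \<le> norm J"
    using norm_blinfun[of J \<phi>] mult_left_le[of "norm \<phi>" "norm J"] by (simp add: J)
  ultimately show ?thesis unfolding J_def by simp
qed

section \<open>Separation of closed convex sets\<close>

(* Only meaningful when W contains a ball around 0; otherwise Inf may be taken of an empty set. *)
definition minkowski_functional :: "'v::real_vector set \<Rightarrow> 'v \<Rightarrow> real" where
  "minkowski_functional W x = Inf {t. 0 < t \<and> (1 / t) *\<^sub>R x \<in> W}"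

context
  fixes W :: "'v::real_normed_vector set" and r :: real
  assumes W: "convex W" and r: "0 < r" and ball_W: "ball 0 r \<subseteq> W"
begin

lemma minkowski_functional_le: "0 < t \<Longrightarrow> (1 / t) *\<^sub>R x \<in> W \<Longrightarrow> minkowski_functional W x \<le> t"
  unfolding minkowski_functional_def by (rule cInf_lower) (auto intro: bdd_belowI[of _ 0])

lemma minkowski_functional_le_norm: "minkowski_functional W x \<le> norm x / r"
proof (rule dense_ge)
  fix t assume t: "norm x / r < t"
  moreover have "0 \<le> norm x / r" using r by simp
  ultimately have "0 < t" by linarith
  moreover have "norm ((1 / t) *\<^sub>R x) < r"
    using t \<open>0 < t\<close> r by (simp add: field_simps)
  ultimately show "minkowski_functional W x \<le> t"
    using ball_W by (intro minkowski_functional_le) auto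
qed

lemma minkowski_functional_ge:
  assumes "\<And>t. 0 < t \<Longrightarrow> (1 / t) *\<^sub>R x \<in> W \<Longrightarrow> c \<le> t"
  shows "c \<le> minkowski_functional W x"
proof -
  have "norm x / r + 1 \<in> {t. 0 < t \<and> (1 / t) *\<^sub>R x \<in> W}"
  proof -
    have "0 \<le> norm x / r" using r by simp
    then have "0 < norm x / r + 1" by linarith
    moreover have "norm ((1 / (norm x / r + 1)) *\<^sub>R x) < r"
      using \<open>0 < norm x / r + 1\<close> r by (simp add: field_simps)
    ultimately show ?thesis using ball_W by auto
  qed
  then show ?thesis
    unfolding minkowski_functional_def using assms by (intro cInf_greatest) auto
qed

lemma minkowski_functional_le_1: "w \<in> W \<Longrightarrow> minkowski_functional W w \<le> 1"
  using minkowski_functional_le[of 1 w] by simp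

lemma minkowski_functional_ge_1:
  assumes "x \<notin> W"
  shows "1 \<le> minkowski_functional W x"
proof (rule minkowski_functional_ge, rule ccontr)
  fix t assume t: "0 < t" "(1 / t) *\<^sub>R x \<in> W" and "\<not> 1 \<le> t"
  have "0 \<in> W" using ball_W r by auto
  then have "t *\<^sub>R ((1 / t) *\<^sub>R x) + (1 - t) *\<^sub>R 0 \<in> W"
    by (rule convexD[OF W t(2)]) (use t \<open>\<not> 1 \<le> t\<close> in auto)
  then show False using t assms by simp
qed

lemma sublinear_minkowski_functional: "sublinear (minkowski_functional W)"
  unfolding sublinear_def
proof (intro conjI allI impI)
  fix x y
  have sum: "minkowski_functional W (x + y) \<le> s + t"
    if s: "0 < s" "(1 / s) *\<^sub>R x \<in> W" and t: "0 < t" "(1 / t) *\<^sub>R y \<in> W" for s t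
  proof (rule minkowski_functional_le)
    have "(s / (s + t)) *\<^sub>R ((1 / s) *\<^sub>R x) + (t / (s + t)) *\<^sub>R ((1 / t) *\<^sub>R y) \<in> W"
      using convexD[OF W s(2) t(2), of "s / (s + t)" "t / (s + t)"] s t
      by (simp add: add_divide_distrib[symmetric])
    then show "(1 / (s + t)) *\<^sub>R (x + y) \<in> W"
      using s t by (simp add: scaleR_add_right)
  qed (use s t in simp)
  have "minkowski_functional W (x + y) - t \<le> minkowski_functional W x"
    if "0 < t" "(1 / t) *\<^sub>R y \<in> W" for t
    using sum that by (intro minkowski_functional_ge) force
  then have "minkowski_functional W (x + y) - minkowski_functional W x \<le> minkowski_functional W y"
    by (intro minkowski_functional_ge) force
  then show "minkowski_functional W (x + y) \<le> minkowski_functional W x + minkowski_functional W y"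
    by simp
next
  have scale_le: "minkowski_functional W (a *\<^sub>R x) \<le> a * minkowski_functional W x" if a: "0 < a" for a x
  proof -
    have "minkowski_functional W (a *\<^sub>R x) / a \<le> minkowski_functional W x"
    proof (rule minkowski_functional_ge)
      fix s assume "0 < s" "(1 / s) *\<^sub>R x \<in> W"
      then have "minkowski_functional W (a *\<^sub>R x) \<le> a * s"
        using a by (intro minkowski_functional_le) auto
      then show "minkowski_functional W (a *\<^sub>R x) / a \<le> s"
        using a by (simp add: divide_le_eq mult.commute)
    qed
    then show ?thesis using a by (simp add: divide_le_eq mult.commute)
  qed
  fix a :: real and x assume a: "0 < a"
  have "minkowski_functional W x \<le> (1 / a) * minkowski_functional W (a *\<^sub>R x)"
    using scale_le[of "1 / a" "a *\<^sub>R x"] a by simp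
  then show "minkowski_functional W (a *\<^sub>R x) = a * minkowski_functional W x"
    using scale_le[OF a, of x] a by (simp add: field_simps)
qed

end

lemma separating_functional_convex_nbhd:
  fixes W :: "'v::real_normed_vector set"
  assumes W: "convex W" "0 < r" "ball 0 r \<subseteq> W" and d: "d \<notin> W"
  obtains \<phi> :: "'v \<Rightarrow>\<^sub>L real"
  where "\<And>w. w \<in> W \<Longrightarrow> blinfun_apply \<phi> w \<le> 1" and "1 \<le> blinfun_apply \<phi> d"
proof -
  obtain f where f: "linear f" "\<And>y. f y \<le> minkowski_functional W y" "f d = minkowski_functional W d"
    using hahn_banach_sublinear[OF sublinear_minkowski_functional[OF W], where z = d] by blast
  have "f y \<le> 1 / r * norm y" for y
    using f(2)[of y] minkowski_functional_le_norm[OF W, of y] by simp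
  then obtain \<phi> :: "'v \<Rightarrow>\<^sub>L real" where \<phi>: "blinfun_apply \<phi> = f"
    using linear_dominated_imp_blinfun[OF f(1)] W(2) by (metis less_eq_real_def zero_less_divide_1_iff)
  show ?thesis
  proof (rule that)
    show "blinfun_apply \<phi> w \<le> 1" if "w \<in> W" for w
      using f(2)[of w] minkowski_functional_le_1[OF W that] \<phi> by simp
    show "1 \<le> blinfun_apply \<phi> d"
      using f(3) minkowski_functional_ge_1[OF W d] \<phi> by simp
  qed
qed

theorem separation_closed_convex:
  fixes C :: "'v::real_normed_vector set"
  assumes C: "convex C" "closed C" and z: "z \<notin> C"
  obtains \<phi> :: "'v \<Rightarrow>\<^sub>L real" and \<delta>
  where "0 < \<delta>" and "\<And>c. c \<in> C \<Longrightarrow> blinfun_apply \<phi> c + \<delta> \<le> blinfun_apply \<phi> z"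
proof (cases "C = {}")
  case True
  then show ?thesis using that[of 1 0] by simp
next
  case False
  then obtain c0 where c0: "c0 \<in> C" by blast
  obtain r where r: "0 < r" "ball z r \<subseteq> - C"
    using C(2) z open_contains_ball[of "- C"] by auto
  define W where "W = (+) c0 ` (\<Union>u \<in> ball 0 r. \<Union>c \<in> C. {u - c})"
  have W: "convex W"
    unfolding W_def by (intro convex_translation convex_differences convex_ball C(1))
  have mem_W: "c0 + (u - c) \<in> W" if "norm u < r" "c \<in> C" for u c
    unfolding W_def using that by (intro imageI) (auto simp: dist_norm)
  have ball_W: "ball 0 r \<subseteq> W"
  proof
    fix u :: 'v assume "u \<in> ball 0 r"
    then show "u \<in> W" using mem_W[of u c0] c0 by (simp add: dist_norm)
  qed
  define d where "d = c0 - z"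
  have d: "d \<notin> W"
  proof
    assume "d \<in> W"
    then obtain u c where "norm u < r" "c \<in> C" "d = c0 + (u - c)" unfolding W_def by auto
    then have "c \<in> ball z r" by (simp add: d_def dist_norm algebra_simps)
    then show False using r(2) \<open>c \<in> C\<close> by blast
  qed
  then have "d \<noteq> 0" using ball_W centre_in_ball[of 0 r] r(1) by blast
  obtain \<phi> :: "'v \<Rightarrow>\<^sub>L real" where \<phi>_W: "\<And>w. w \<in> W \<Longrightarrow> blinfun_apply \<phi> w \<le> 1"
    and \<phi>_d: "1 \<le> blinfun_apply \<phi> d"
    using separating_functional_convex_nbhd[OF W r(1) ball_W d] by blast
  (* The strict margin: shifting c0 - c by the small multiple \<sigma> d stays inside W. *)
  define \<sigma> where "\<sigma> = r / (2 * norm d)"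
  have \<sigma>: "0 < \<sigma>" "norm (\<sigma> *\<^sub>R d) < r"
    using r(1) \<open>d \<noteq> 0\<close> unfolding \<sigma>_def by simp_all
  have "blinfun_apply \<phi> z + \<sigma> \<le> blinfun_apply \<phi> c" if "c \<in> C" for c
  proof -
    have "blinfun_apply \<phi> (c0 + (\<sigma> *\<^sub>R d - c)) \<le> blinfun_apply \<phi> d"
      using \<phi>_W[OF mem_W[OF \<sigma>(2) that]] \<phi>_d by linarith
    then have "\<sigma> * blinfun_apply \<phi> d \<le> blinfun_apply \<phi> c - blinfun_apply \<phi> z"
      by (simp add: d_def blinfun.add_right blinfun.diff_right blinfun.scaleR_right)
    moreover have "\<sigma> \<le> \<sigma> * blinfun_apply \<phi> d" using \<sigma>(1) \<phi>_d by simp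
    ultimately show ?thesis by simp
  qed
  then show ?thesis using that[of \<sigma> "- \<phi>"] \<sigma>(1) by (force simp: uminus_blinfun.rep_eq)
qed

section \<open>Uniform boundedness and weak convergence\<close>

lemma norm_blinfun_le_of_ball:
  fixes F :: "'b::real_normed_vector \<Rightarrow>\<^sub>L 'c::real_normed_vector"
  assumes r: "0 < r" and bound: "\<And>u. norm u < r \<Longrightarrow> norm (blinfun_apply F u) \<le> K"
  shows "norm F \<le> 2 * K / r"
proof (rule norm_blinfun_bound)
  show "0 \<le> 2 * K / r" using bound[of 0] r by simp
  fix u
  show "norm (blinfun_apply F u) \<le> 2 * K / r * norm u"
  proof (cases "u = 0")
    case False
    define s where "s = r / (2 * norm u)"
    have s: "0 < s" "norm (s *\<^sub>R u) < r" using False r unfolding s_def by simp_all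
    have "s * norm (blinfun_apply F u) \<le> K"
      using bound[OF s(2)] s(1) by (simp add: blinfun.scaleR_right)
    then show ?thesis using False r unfolding s_def by (simp add: field_simps)
  qed simp
qed

theorem uniform_boundedness:
  fixes F :: "'i \<Rightarrow> ('b::banach \<Rightarrow>\<^sub>L 'c::real_normed_vector)"
  assumes pointwise: "\<And>x. bounded (range (\<lambda>i. blinfun_apply (F i) x))"
  shows "bounded (range F)"
proof -
  define E where "E k = {x. \<forall>i. norm (blinfun_apply (F i) x) \<le> real k}" for k :: nat
  have closed: "closed (E k)" for k
    unfolding E_def Collect_all_eq by (intro closed_INT ballI closed_Collect_le continuous_intros)
  have "x \<in> \<Union>(range E)" for x
  proof -
    obtain b where "\<And>i. norm (blinfun_apply (F i) x) \<le> b"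
      using pointwise[of x] unfolding bounded_iff by blast
    then have "x \<in> E (nat \<lceil>b\<rceil>)"
      unfolding E_def using real_nat_ceiling_ge order_trans by blast
    then show ?thesis by blast
  qed
  then have cover: "\<Union>(range E) = UNIV" by blast
  moreover have "\<exists>k. interior (E k) \<noteq> {}"
  proof (rule ccontr)
    assume "\<nexists>k. interior (E k) \<noteq> {}"
    then have "euclidean interior_of \<Union>(range E) = {}"
      using closed completely_metrizable_space_euclidean
      by (intro Baire_category_alt) auto
    then show False using cover by simp
  qed
  ultimately obtain k x0 r where r: "0 < r" "ball x0 r \<subseteq> E k"
    by (meson ex_in_conv open_contains_ball open_interior interior_subset order_trans)
  have ball_bound: "norm (blinfun_apply (F i) u) \<le> 2 * real k" if "norm u < r" for i u
  proof -
    have "x0 + u \<in> E k" "x0 \<in> E k" using r that by (auto simp: dist_norm)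
    then have "norm (blinfun_apply (F i) (x0 + u)) \<le> real k" "norm (blinfun_apply (F i) x0) \<le> real k"
      unfolding E_def by auto
    then show ?thesis
      using norm_triangle_ineq4[of "blinfun_apply (F i) (x0 + u)" "blinfun_apply (F i) x0"]
      by (simp add: blinfun.add_right)
  qed
  have "norm (F i) \<le> 2 * (2 * real k) / r" for i
    by (rule norm_blinfun_le_of_ball[OF r(1) ball_bound])
  then show ?thesis unfolding bounded_iff by (intro exI[of _ "2 * (2 * real k) / r"]) auto
qed

lemma tendsto_imp_weak_conv: "xn \<longlonglongrightarrow> x \<Longrightarrow> weak_conv xn x"
  unfolding weak_conv_def by (blast intro: bounded_linear.tendsto[OF blinfun.bounded_linear_right])

lemma weak_conv_bounded_linear:
  fixes f :: "'b::real_normed_vector \<Rightarrow> real"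
  assumes "weak_conv xn x" and "bounded_linear f"
  shows "(\<lambda>n. f (xn n)) \<longlonglongrightarrow> f x"
  using assms(1)[unfolded weak_conv_def, rule_format, of "Blinfun f"]
  by (simp add: bounded_linear_Blinfun_apply[OF assms(2)])

lemma weak_conv_Pair:
  assumes "weak_conv xn x" and "weak_conv yn y"
  shows "weak_conv (\<lambda>n. (xn n, yn n)) (x, y)"
  unfolding weak_conv_def
proof
  fix \<phi> :: "('a \<times> 'b) \<Rightarrow>\<^sub>L real"
  have "(\<lambda>n. blinfun_apply \<phi> (xn n, 0) + blinfun_apply \<phi> (0, yn n))
      \<longlonglongrightarrow> blinfun_apply \<phi> (x, 0) + blinfun_apply \<phi> (0, y)"
    by (intro tendsto_add weak_conv_bounded_linear[OF assms(1)] weak_conv_bounded_linear[OF assms(2)]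
        bounded_linear_compose[OF blinfun.bounded_linear_right]
        bounded_linear_Pair bounded_linear_ident bounded_linear_zero)
  then show "(\<lambda>n. blinfun_apply \<phi> (xn n, yn n)) \<longlonglongrightarrow> blinfun_apply \<phi> (x, y)"
    by (simp add: blinfun.add_right[symmetric])
qed

lemma weak_conv_imp_Bseq:
  fixes xn :: "nat \<Rightarrow> 'b::real_normed_vector"
  assumes "weak_conv xn x"
  shows "Bseq xn"
proof -
  define J where "J y = Blinfun (\<lambda>\<phi>::'b \<Rightarrow>\<^sub>L real. blinfun_apply \<phi> y)" for y
  have J: "blinfun_apply (J y) \<phi> = blinfun_apply \<phi> y" for y \<phi>
    unfolding J_def by (simp add: bounded_linear_Blinfun_apply[OF blinfun.bounded_linear_left])
  have "bounded (range (\<lambda>n. blinfun_apply (J (xn n)) \<phi>))" for \<phi>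
    using assms unfolding weak_conv_def J Bseq_eq_bounded[symmetric]
    by (blast intro: convergent_imp_Bseq convergentI)
  then have "bounded (range (\<lambda>n. J (xn n)))" by (rule uniform_boundedness)
  then show ?thesis
    unfolding Bseq_eq_bounded J_def bounded_iff by (simp add: norm_blinfun_evaluation)
qed

lemma tendsto_blinfun_apply_weak_strong:
  fixes xn :: "nat \<Rightarrow> 'b::real_normed_vector" and \<phi>n :: "nat \<Rightarrow> 'b \<Rightarrow>\<^sub>L real"
  assumes "weak_conv xn x" and "\<phi>n \<longlonglongrightarrow> \<phi>"
  shows "(\<lambda>n. blinfun_apply (\<phi>n n) (xn n)) \<longlonglongrightarrow> blinfun_apply \<phi> x"
proof -
  have "Zfun (\<lambda>n. blinfun_apply (\<phi>n n - \<phi>) (xn n)) sequentially"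
    using assms(2)[unfolded tendsto_Zfun_iff] weak_conv_imp_Bseq[OF assms(1)]
    by (rule bounded_bilinear.Zfun_prod_Bfun[OF bounded_bilinear_blinfun_apply])
  then have "(\<lambda>n. blinfun_apply (\<phi>n n - \<phi>) (xn n) + blinfun_apply \<phi> (xn n))
      \<longlonglongrightarrow> 0 + blinfun_apply \<phi> x"
    using assms(1) unfolding weak_conv_def by (intro tendsto_add) (auto simp: tendsto_Zfun_iff)
  then show ?thesis by (simp add: blinfun.diff_left)
qed

lemma tendsto_blinfun_apply_strong_weak:
  fixes xn :: "nat \<Rightarrow> 'b::real_normed_vector" and \<phi>n :: "nat \<Rightarrow> 'b \<Rightarrow>\<^sub>L real"
  assumes "xn \<longlonglongrightarrow> x" and "weak_conv \<phi>n \<phi>"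
  shows "(\<lambda>n. blinfun_apply (\<phi>n n) (xn n)) \<longlonglongrightarrow> blinfun_apply \<phi> x"
proof -
  have "Zfun (\<lambda>n. blinfun_apply (\<phi>n n) (xn n - x)) sequentially"
    using weak_conv_imp_Bseq[OF assms(2)] assms(1)[unfolded tendsto_Zfun_iff]
    by (rule bounded_bilinear.Bfun_prod_Zfun[OF bounded_bilinear_blinfun_apply])
  then have "(\<lambda>n. blinfun_apply (\<phi>n n) (xn n - x) + blinfun_apply (\<phi>n n) x)
      \<longlonglongrightarrow> 0 + blinfun_apply \<phi> x"
    by (intro tendsto_add weak_conv_bounded_linear[OF assms(2) blinfun.bounded_linear_left])
      (simp add: tendsto_Zfun_iff)
  then show ?thesis by (simp add: blinfun.diff_right)
qed

lemma convex_ereal_sublevel: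
  assumes "ereal_convex g" and "\<And>z. g z \<noteq> -\<infinity>"
  shows "convex {z. g z \<le> ereal c}"
proof (rule convexI, clarsimp)
  fix z w and u v :: real
  assume z: "g z \<le> ereal c" and w: "g w \<le> ereal c" and uv: "0 \<le> u" "0 \<le> v" "u + v = 1"
  obtain a where a: "g z = ereal a" "a \<le> c" using z assms(2)[of z] by (cases "g z") auto
  obtain b where b: "g w = ereal b" "b \<le> c" using w assms(2)[of w] by (cases "g w") auto
  have u: "u = 1 - v" using uv(3) by simp
  have "g (u *\<^sub>R z + v *\<^sub>R w) \<le> ereal u * g z + ereal v * g w"
    using assms(1)[unfolded ereal_convex_def, rule_format, OF uv(2), of z w] uv unfolding u by simp
  also have "\<dots> = ereal (u * a + v * b)" using a b by simp
  also have "u * a + v * b \<le> u * c + v * c"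
    using a b uv by (intro add_mono mult_left_mono)
  also have "u * c + v * c = c" using uv(3) by (simp flip: distrib_right)
  finally show "g (u *\<^sub>R z + v *\<^sub>R w) \<le> ereal c" by simp
qed

lemma weak_conv_ereal_lsc:
  fixes g :: "'v::real_normed_vector \<Rightarrow> ereal"
  assumes lsc: "ereal_lsc g" and convex: "ereal_convex g" and finite: "\<And>z. g z \<noteq> -\<infinity>"
    and conv: "weak_conv zn z" and "bn \<longlonglongrightarrow> b" and le: "\<And>n. g (zn n) \<le> ereal (bn n)"
  shows "g z \<le> ereal b"
proof (rule ccontr)
  assume "\<not> g z \<le> ereal b"
  then have "ereal b < g z" by (simp add: not_le)
  from ereal_dense2[OF this] obtain c where "ereal b < ereal c" "ereal c < g z" by blast
  then have c: "b < c" "ereal c < g z" by simp_all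
  define C where "C = {w. g w \<le> ereal c}"
  have "convex C" "closed C"
    unfolding C_def using convex_ereal_sublevel[OF convex finite] lsc ereal_lsc_def by auto
  moreover have "z \<notin> C" using c unfolding C_def by auto
  ultimately obtain \<phi> :: "'v \<Rightarrow>\<^sub>L real" and \<delta>
    where \<delta>: "0 < \<delta>" and sep: "\<And>w. w \<in> C \<Longrightarrow> blinfun_apply \<phi> w + \<delta> \<le> blinfun_apply \<phi> z"
    using separation_closed_convex by metis
  have "\<forall>\<^sub>F n in sequentially. dist (blinfun_apply \<phi> (zn n)) (blinfun_apply \<phi> z) < \<delta>"
    using conv \<delta> unfolding weak_conv_def by (simp add: tendstoD)
  moreover have "\<forall>\<^sub>F n in sequentially. bn n < c"
    using \<open>bn \<longlonglongrightarrow> b\<close> c(1) by (rule order_tendstoD)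
  ultimately have "\<forall>\<^sub>F n in sequentially. False"
  proof eventually_elim
    case (elim n)
    then have "zn n \<notin> C" using sep[of "zn n"] by (auto simp: dist_real_def)
    then show False using le[of n] elim(2) unfolding C_def by (simp add: order_trans less_imp_le)
  qed
  then show False by simp
qed

lemma closed_convex_imp_weakly_closed:
  fixes S :: "'b::real_normed_vector set"
  assumes "convex S" and "closed S"
  shows "weakly_closed S"
  unfolding weakly_closed_def
proof (intro allI impI)
  fix x assume "x \<notin> S"
  then obtain \<phi> :: "'b \<Rightarrow>\<^sub>L real" and \<delta>
    where "0 < \<delta>" and sep: "\<And>y. y \<in> S \<Longrightarrow> blinfun_apply \<phi> y + \<delta> \<le> blinfun_apply \<phi> x"
    using separation_closed_convex[OF assms] by metis
  show "\<exists>F :: ('b \<Rightarrow>\<^sub>L real) set. finite F \<and>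
    (\<exists>e>0. \<forall>y. (\<forall>f\<in>F. \<bar>blinfun_apply f y - blinfun_apply f x\<bar> < e) \<longrightarrow> y \<notin> S)"
  proof (intro exI conjI)
    show "finite {\<phi>}" by simp
    show "\<forall>y. (\<forall>f\<in>{\<phi>}. \<bar>blinfun_apply f y - blinfun_apply f x\<bar> < \<delta>) \<longrightarrow> y \<notin> S"
      using sep by force
  qed fact
qed

section \<open>The enlargement\<close>

lemma le_0_of_affine_le_0_at_right:
  fixes a b :: real
  assumes "\<And>t. 0 < t \<Longrightarrow> t < 1 \<Longrightarrow> a + t * b \<le> 0"
  shows "a \<le> 0"
proof (rule tendsto_upperbound)
  show "((\<lambda>t. a + t * b) \<longlongrightarrow> a) (at_right 0)"
    by (auto intro!: tendsto_eq_intros)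
  show "\<forall>\<^sub>F t in at_right 0. a + t * b \<le> 0"
    using assms by (auto simp: eventually_at_right_field intro!: exI[of _ 1])
qed simp

(* On the segment from (x, xs) to (y, ys), h lies between the quadratic pairing and the affine
   interpolation, which agree at the end (x, xs); compare their slopes there. *)
lemma HT_ge_graph_pairing:
  assumes h: "h \<in> HT T" and graph: "xs \<in> T x"
  shows "ereal (blinfun_apply xs y + blinfun_apply ys x - blinfun_apply xs x) \<le> h (y, ys)"
proof (cases "h (y, ys)")
  case (real R)
  have convex: "ereal_convex h" and ge: "\<And>z. ereal (blinfun_apply (snd z) (fst z)) \<le> h z"
    and eq: "h (x, xs) = ereal (blinfun_apply xs x)"
    using h graph unfolding HT_def by auto
  define a where "a = blinfun_apply xs y + blinfun_apply ys x - blinfun_apply xs x - R"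
  define b where "b = blinfun_apply ys y - blinfun_apply xs y - blinfun_apply ys x + blinfun_apply xs x"
  have "a + t * b \<le> 0" if t: "0 < t" "t < 1" for t
  proof -
    define z where "z = (1 - t) *\<^sub>R (x, xs) + t *\<^sub>R (y, ys)"
    have "ereal (blinfun_apply (snd z) (fst z)) \<le> ereal (1 - t) * h (x, xs) + ereal t * h (y, ys)"
      using ge[of z] convex t unfolding ereal_convex_def z_def by (meson less_imp_le order_trans)
    then have "blinfun_apply (snd z) (fst z) \<le> (1 - t) * blinfun_apply xs x + t * R"
      using eq real by simp
    moreover have "blinfun_apply (snd z) (fst z) = (1 - t) * blinfun_apply xs x + t * R + t * (a + t * b)"
    proof -
      have "fst z = (1 - t) *\<^sub>R x + t *\<^sub>R y" "snd z = (1 - t) *\<^sub>R xs + t *\<^sub>R ys"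
        unfolding z_def by simp_all
      then show ?thesis
        by (simp only: blinfun.add_left blinfun.add_right blinfun.scaleR_left blinfun.scaleR_right
            real_scaleR_def) (simp add: a_def b_def algebra_simps)
    qed
    ultimately have "t * (a + t * b) \<le> 0" by simp
    then show ?thesis using t by (simp add: mult_le_0_iff)
  qed
  then have "a \<le> 0" by (rule le_0_of_affine_le_0_at_right)
  then show ?thesis using real unfolding a_def by simp
qed (use h in \<open>simp_all add: HT_def\<close>)

lemma maximal_monotone_memI:
  assumes max: "maximal_monotone T"
    and mono: "\<And>y ys. ys \<in> T y \<Longrightarrow> 0 \<le> blinfun_apply (xs - ys) (x - y)"
  shows "xs \<in> T x"
proof -
  define S where "S z = (if z = x then insert xs (T x) else T z)" for z
  have "monotone_op T" using max unfolding maximal_monotone_def by blast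
  moreover have "blinfun_apply (a - b) (p - q) = blinfun_apply (b - a) (q - p)"
    for a b :: "'a \<Rightarrow>\<^sub>L real" and p q
    by (simp add: blinfun.diff_left blinfun.diff_right algebra_simps)
  ultimately have "monotone_op S"
    using mono unfolding monotone_op_def S_def by (auto split: if_splits)
  moreover have "\<forall>z. T z \<subseteq> S z" unfolding S_def by auto
  ultimately have "S = T" using max unfolding maximal_monotone_def by blast
  then show ?thesis using fun_cong[of S T x] unfolding S_def by auto
qed

lemma Tbreve_iff:
  fixes h :: "'a::real_normed_vector \<times> ('a \<Rightarrow>\<^sub>L real) \<Rightarrow> ereal"
  assumes "\<And>z. h z \<noteq> -\<infinity>"
  shows "xs \<in> Tbreve h \<epsilon> x \<longleftrightarrow> (\<exists>r. h (x, xs) = ereal r \<and> (\<forall>y ys.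
    ereal (r + blinfun_apply xs y + blinfun_apply ys x - 2 * blinfun_apply xs x - 2 * \<epsilon>) \<le> h (y, ys)))"
proof -
  have pair: "pair_dual (y - x, ys - xs) (xs, x)
      = blinfun_apply xs y + blinfun_apply ys x - 2 * blinfun_apply xs x" for y ys
    unfolding pair_dual_def by (simp add: blinfun.diff_left blinfun.diff_right)
  show ?thesis
  proof (cases "h (x, xs)")
    case (real r)
    then show ?thesis
      unfolding Tbreve_def eps_subdiff_def by (simp add: pair algebra_simps)
  qed (use assms in \<open>simp_all add: Tbreve_def eps_subdiff_def\<close>)
qed

lemma convex_Tbreve:
  assumes convex: "ereal_convex h" and finite: "\<And>z. h z \<noteq> -\<infinity>"
  shows "convex (Tbreve h \<epsilon> x)"
proof (rule convexI)
  fix xs1 xs2 and u v :: real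
  assume "xs1 \<in> Tbreve h \<epsilon> x" "xs2 \<in> Tbreve h \<epsilon> x" and uv: "0 \<le> u" "0 \<le> v" "u + v = 1"
  then obtain r1 r2 where r1: "h (x, xs1) = ereal r1"
    and le1: "\<And>y ys. ereal (r1 + blinfun_apply xs1 y + blinfun_apply ys x
      - 2 * blinfun_apply xs1 x - 2 * \<epsilon>) \<le> h (y, ys)"
    and r2: "h (x, xs2) = ereal r2"
    and le2: "\<And>y ys. ereal (r2 + blinfun_apply xs2 y + blinfun_apply ys x
      - 2 * blinfun_apply xs2 x - 2 * \<epsilon>) \<le> h (y, ys)"
    unfolding Tbreve_iff[OF finite] by blast
  define xs where "xs = u *\<^sub>R xs1 + v *\<^sub>R xs2"
  have u: "u = 1 - v" using uv(3) by simp
  have "h (x, xs) \<le> ereal u * h (x, xs1) + ereal v * h (x, xs2)"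
    using convex[unfolded ereal_convex_def, rule_format, OF uv(2), of "(x, xs1)" "(x, xs2)"] uv
    unfolding xs_def u by (simp add: algebra_simps)
  then obtain r where r: "h (x, xs) = ereal r" and r_le: "r \<le> u * r1 + v * r2"
    using r1 r2 finite[of "(x, xs)"] by (cases "h (x, xs)") auto
  have "ereal (r + blinfun_apply xs y + blinfun_apply ys x - 2 * blinfun_apply xs x - 2 * \<epsilon>) \<le> h (y, ys)" for y ys
  proof (cases "h (y, ys)")
    case (real R)
    have "u * (r1 + blinfun_apply xs1 y + blinfun_apply ys x - 2 * blinfun_apply xs1 x - 2 * \<epsilon>)
          + v * (r2 + blinfun_apply xs2 y + blinfun_apply ys x - 2 * blinfun_apply xs2 x - 2 * \<epsilon>)
        = (u * r1 + v * r2) + blinfun_apply xs y + blinfun_apply ys x - 2 * blinfun_apply xs x - 2 * \<epsilon>"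
      unfolding xs_def u by (simp add: blinfun.add_left blinfun.diff_left blinfun.scaleR_left algebra_simps)
    then have "r + blinfun_apply xs y + blinfun_apply ys x - 2 * blinfun_apply xs x - 2 * \<epsilon>
        \<le> u * (r1 + blinfun_apply xs1 y + blinfun_apply ys x - 2 * blinfun_apply xs1 x - 2 * \<epsilon>)
          + v * (r2 + blinfun_apply xs2 y + blinfun_apply ys x - 2 * blinfun_apply xs2 x - 2 * \<epsilon>)"
      using r_le by linarith
    also have "\<dots> \<le> u * R + v * R"
      using le1[of y ys] le2[of y ys] real uv by (intro add_mono mult_left_mono) auto
    also have "\<dots> = R" using uv(3) by (simp flip: distrib_right)
    finally show ?thesis using real by simp
  qed (use finite in auto)
  then show "u *\<^sub>R xs1 + v *\<^sub>R xs2 \<in> Tbreve h \<epsilon> x"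
    unfolding Tbreve_iff[OF finite] xs_def[symmetric] using r by blast
qed

lemma Tbreve_zero:
  assumes h: "h \<in> HT T" and max: "maximal_monotone T"
  shows "Tbreve h 0 x = T x"
proof
  have finite: "\<And>z. h z \<noteq> -\<infinity>" and ge: "\<And>y ys. ereal (blinfun_apply ys y) \<le> h (y, ys)"
    and eq: "\<And>y ys. ys \<in> T y \<Longrightarrow> h (y, ys) = ereal (blinfun_apply ys y)"
    using h unfolding HT_def by auto
  show "T x \<subseteq> Tbreve h 0 x"
  proof
    fix xs assume xs: "xs \<in> T x"
    have "ereal (blinfun_apply xs x + blinfun_apply xs y + blinfun_apply ys x - 2 * blinfun_apply xs x - 2 * 0)
        \<le> h (y, ys)" for y ys
      using HT_ge_graph_pairing[OF h xs, of y ys] by simp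
    then show "xs \<in> Tbreve h 0 x"
      unfolding Tbreve_iff[OF finite] using eq[OF xs] by blast
  qed
  show "Tbreve h 0 x \<subseteq> T x"
  proof
    fix xs assume "xs \<in> Tbreve h 0 x"
    then obtain r where r: "h (x, xs) = ereal r"
      and le: "\<And>y ys. ereal (r + blinfun_apply xs y + blinfun_apply ys x - 2 * blinfun_apply xs x) \<le> h (y, ys)"
      unfolding Tbreve_iff[OF finite] by auto
    have "blinfun_apply xs x \<le> r" using ge[of xs x] r by simp
    then have "0 \<le> blinfun_apply (xs - ys) (x - y)" if "ys \<in> T y" for y ys
      using le[of y ys] eq[OF that] by (simp add: blinfun.diff_left blinfun.diff_right)
    then show "xs \<in> T x" by (rule maximal_monotone_memI[OF max])
  qed
qed

lemma Tbreve_limit: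
  fixes xn :: "nat \<Rightarrow> 'a::real_normed_vector"
  assumes lsc: "ereal_lsc h" and convex: "ereal_convex h" and finite: "\<And>z. h z \<noteq> -\<infinity>"
    and x: "weak_conv xn x" and xs: "weak_conv xsn xs"
    and pairing: "(\<lambda>n. blinfun_apply (xsn n) (xn n)) \<longlonglongrightarrow> blinfun_apply xs x"
    and mem: "\<And>n. xsn n \<in> Tbreve h (\<epsilon>n n) (xn n)" and \<epsilon>: "\<epsilon>n \<longlonglongrightarrow> \<epsilon>"
  shows "xs \<in> Tbreve h \<epsilon> x"
proof -
  define rn where "rn n = real_of_ereal (h (xn n, xsn n))" for n
  have rn: "h (xn n, xsn n) = ereal (rn n)"
    and le: "\<And>y ys. ereal (rn n + blinfun_apply (xsn n) y + blinfun_apply ys (xn n)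
      - 2 * blinfun_apply (xsn n) (xn n) - 2 * \<epsilon>n n) \<le> h (y, ys)" for n
    using mem[of n] unfolding Tbreve_iff[OF finite] rn_def by auto
  have bound: "h (x, xs) \<le> ereal (R - blinfun_apply xs y - blinfun_apply ys x + 2 * blinfun_apply xs x + 2 * \<epsilon>)"
    if R: "h (y, ys) = ereal R" for y ys R
  proof (rule weak_conv_ereal_lsc[OF lsc convex finite weak_conv_Pair[OF x xs]])
    have y: "(\<lambda>n. blinfun_apply (xsn n) y) \<longlonglongrightarrow> blinfun_apply xs y"
      by (rule weak_conv_bounded_linear[OF xs blinfun.bounded_linear_left])
    have ys: "(\<lambda>n. blinfun_apply ys (xn n)) \<longlonglongrightarrow> blinfun_apply ys x"
      using x unfolding weak_conv_def by blast
    show "(\<lambda>n. R - blinfun_apply (xsn n) y - blinfun_apply ys (xn n)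
        + 2 * blinfun_apply (xsn n) (xn n) + 2 * \<epsilon>n n)
      \<longlonglongrightarrow> R - blinfun_apply xs y - blinfun_apply ys x + 2 * blinfun_apply xs x + 2 * \<epsilon>"
      by (intro tendsto_add tendsto_diff tendsto_mult_left tendsto_const y ys pairing \<epsilon>)
    show "h (xn n, xsn n) \<le> ereal (R - blinfun_apply (xsn n) y - blinfun_apply ys (xn n)
        + 2 * blinfun_apply (xsn n) (xn n) + 2 * \<epsilon>n n)" for n
      using le[of n y ys] rn[of n] R by simp
  qed
  (* h (x, xs) is finite: the bound applies at the point (xn 0, xsn 0), where h is finite. *)
  obtain r where r: "h (x, xs) = ereal r"
    using bound[OF rn[of 0]] finite[of "(x, xs)"] by (cases "h (x, xs)") auto
  have "ereal (r + blinfun_apply xs y + blinfun_apply ys x - 2 * blinfun_apply xs x - 2 * \<epsilon>) \<le> h (y, ys)" for y ys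
    using bound[of y ys] r finite[of "(y, ys)"] by (cases "h (y, ys)") auto
  then show ?thesis unfolding Tbreve_iff[OF finite] using r by blast
qed

lemma closed_Tbreve:
  assumes "ereal_lsc h" and "ereal_convex h" and "\<And>z. h z \<noteq> -\<infinity>"
  shows "closed (Tbreve h \<epsilon> x)"
  unfolding closed_sequential_limits
proof (intro allI impI, elim conjE)
  fix xsn xs assume mem: "\<forall>n. xsn n \<in> Tbreve h \<epsilon> x" and lim: "xsn \<longlonglongrightarrow> xs"
  have "(\<lambda>n. blinfun_apply (xsn n) x) \<longlonglongrightarrow> blinfun_apply xs x"
    using lim by (rule bounded_linear.tendsto[OF blinfun.bounded_linear_left])
  then show "xs \<in> Tbreve h \<epsilon> x"
    by (rule Tbreve_limit[OF assms tendsto_imp_weak_conv[OF tendsto_const] tendsto_imp_weak_conv[OF lim]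
          _ _ tendsto_const]) (use mem in blast)
qed

theorem corollary3p2:
  fixes T :: "'a::banach \<Rightarrow> ('a \<Rightarrow>\<^sub>L real) set"
    and h :: "'a \<times> ('a \<Rightarrow>\<^sub>L real) \<Rightarrow> ereal"
  assumes "reflexive_space TYPE('a)"
    and "maximal_monotone T"
    and "h \<in> HT T"
  shows "(\<forall>x\<in>dom_op T. \<forall>\<epsilon>\<ge>0. convex (Tbreve h \<epsilon> x))
    \<and> (\<forall>xn x xsn xs \<epsilon>n \<epsilon>. xn \<longlonglongrightarrow> x \<longrightarrow> weak_conv xsn xs \<longrightarrow>
          (\<forall>n. xsn n \<in> Tbreve h (\<epsilon>n n) (xn n)) \<longrightarrow> \<epsilon>n \<longlonglongrightarrow> \<epsilon> \<longrightarrow> \<epsilon> \<ge> 0 \<longrightarrow>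
          xs \<in> Tbreve h \<epsilon> x)
    \<and> (\<forall>xn x xsn xs \<epsilon>n \<epsilon>. weak_conv xn x \<longrightarrow> xsn \<longlonglongrightarrow> xs \<longrightarrow>
          (\<forall>n. xsn n \<in> Tbreve h (\<epsilon>n n) (xn n)) \<longrightarrow> \<epsilon>n \<longlonglongrightarrow> \<epsilon> \<longrightarrow> \<epsilon> \<ge> 0 \<longrightarrow>
          xs \<in> Tbreve h \<epsilon> x)
    \<and> (\<forall>x. \<forall>\<epsilon>\<ge>0. weakly_closed (Tbreve h \<epsilon> x))
    \<and> (\<forall>x. Tbreve h 0 x = T x)"
proof -
  have lsc: "ereal_lsc h" and convex: "ereal_convex h" and finite: "\<And>z. h z \<noteq> -\<infinity>"
    using assms(3) unfolding HT_def by auto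
  note limit = Tbreve_limit[OF lsc convex finite]
  show ?thesis
  proof (intro conjI ballI allI impI)
    show "convex (Tbreve h \<epsilon> x)" for x \<epsilon>
      by (rule convex_Tbreve[OF convex finite])
    show "xs \<in> Tbreve h \<epsilon> x"
      if "xn \<longlonglongrightarrow> x" "weak_conv xsn xs" "\<forall>n. xsn n \<in> Tbreve h (\<epsilon>n n) (xn n)" "\<epsilon>n \<longlonglongrightarrow> \<epsilon>"
      for xn x xsn xs \<epsilon>n \<epsilon>
      by (rule limit[OF tendsto_imp_weak_conv[OF that(1)] that(2)
            tendsto_blinfun_apply_strong_weak[OF that(1,2)] _ that(4)]) (use that(3) in blast)
    show "xs \<in> Tbreve h \<epsilon> x"
      if "weak_conv xn x" "xsn \<longlonglongrightarrow> xs" "\<forall>n. xsn n \<in> Tbreve h (\<epsilon>n n) (xn n)" "\<epsilon>n \<longlonglongrightarrow> \<epsilon>"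
      for xn x xsn xs \<epsilon>n \<epsilon>
      by (rule limit[OF that(1) tendsto_imp_weak_conv[OF that(2)]
            tendsto_blinfun_apply_weak_strong[OF that(1,2)] _ that(4)]) (use that(3) in blast)
    show "weakly_closed (Tbreve h \<epsilon> x)" for x \<epsilon>
      by (intro closed_convex_imp_weakly_closed convex_Tbreve closed_Tbreve lsc convex finite)
    show "Tbreve h 0 x = T x" for x
      by (rule Tbreve_zero[OF assms(3,2)])
  qed
qed

end
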